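(* Let $\gamma=\exp(z_\gamma Z)\in H_n$ for some $z_\gamma\in\mathbb R\setminus\{0\}$ and suppose $\sigma$ is a $\gamma$-periodic magnetic geodesic which is a one-parameter subgroup. Then $\sigma(t)=\exp(tz_0Z)$ for some $z_0\in\mathbb R\setminus\{0\}$. Moreover, for every $E>0$, the two curves $\sigma(t)=\exp(\pm tEZ)$ are $\gamma$-periodic magnetic geodesics of energy $E$, with periods $\omega=z_\gamma/(\pm E)$ respectively.
   Context: Let $\mathfrak h_n$ be the real Lie algebra with basis $X_1,\dots,X_n,Y_1,\dots,Y_n,Z$ whose only nonzero brackets among basis vectors are $[X_i,Y_i]=Z$, and $H_n$ the simply connected Lie group with Lie algebra $\mathfrak h_n$; $\exp(U)\exp(W)=\exp(U+W+\tfrac12[U,W])$. Fix $A_i>0$; $g$ is the left-invariant metric with orthonormal basis $\{X_i/\sqrt{A_i},Y_i/\sqrt{A_i},Z\}$. With $\{\alpha_i,\beta_i,\zeta\}$ the dual basis and $B\in\mathbb R$, $\Omega=d(B\zeta)$; magnetic geodesics solve $\nabla_{\sigma'}\sigma'=F\sigma'$, $g(Fu,v)=\Omega(u,v)$. The magnetic geodesics with $\sigma(0)=e$ are exactly $\sigma(t)=\exp(\sum x_iX_i+\sum y_iY_i+zZ)$ with, for parameters $(u_i,v_i,z_0)$: if $z_0\ne0$, $x_i=\frac{u_i}{z_0}\sin(\frac{z_0t}{A_i})-\frac{v_i}{z_0}(1-\cos(\frac{z_0t}{A_i}))$, $y_i=\frac{u_i}{z_0}(1-\cos(\frac{z_0t}{A_i}))+\frac{v_i}{z_0}\sin(\frac{z_0t}{A_i})$,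 $z=(z_0+B+\sum\frac{u_i^2+v_i^2}{2A_iz_0})t-\sum\frac{u_i^2+v_i^2}{2z_0^2}\sin(\frac{z_0t}{A_i})$; if $z_0=0$, $x_i=u_it/A_i$, $y_i=v_it/A_i$, $z=Bt$. The energy $E=|\sigma'|$ satisfies $E^2=\sum\frac{u_i^2+v_i^2}{A_i}+(z_0+B)^2$. For $\gamma\neq e$, $\sigma$ is $\gamma$-periodic with period $\omega\ne0$ if $\gamma\sigma(t)=\sigma(t+\omega)$ for all $t$. *)

theory Defs
  imports "HOL-Analysis.Analysis"
begin

text \<open>The Heisenberg Lie algebra h_n, with n = CARD('n): an element
  sum x_i X_i + sum y_i Y_i + z Z is represented by the triple (x, y, z).
  Since H_n is simply connected nilpotent, exp is a global diffeomorphism and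
  we identify H_n with h_n via exponential coordinates: the group element
  exp(U) is represented by U itself.\<close>

type_synonym 'n heis = "(real^'n::finite) \<times> (real^'n) \<times> real"

definition hx :: "('n::finite) heis \<Rightarrow> real^'n" where "hx U = fst U"
definition hy :: "('n::finite) heis \<Rightarrow> real^'n" where "hy U = fst (snd U)"
definition hz :: "('n::finite) heis \<Rightarrow> real" where "hz U = snd (snd U)"

definition hZ :: "('n::finite) heis" where "hZ = (0, 0, 1)"

text \<open>Lie bracket: the only nonzero brackets are [X_i, Y_i] = Z.\<close>
definition bracket :: "('n::finite) heis \<Rightarrow> ('n::finite) heis \<Rightarrow> ('n::finite) heis" where
  "bracket U W = (0, 0, (\<Sum>i\<in>UNIV. hx U $ i * hy W $ i - hy U $ i * hx W $ i))"

definition hexp :: "('n::finite) heis \<Rightarrow> ('n::finite) heis" where "hexp U = U"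

definition hmul :: "('n::finite) heis \<Rightarrow> ('n::finite) heis \<Rightarrow> ('n::finite) heis" where
  "hmul p q = p + q + (1/2) *\<^sub>R bracket p q"

definition hunit :: "('n::finite) heis" where "hunit = hexp 0"

text \<open>Left-invariant metric with orthonormal basis X_i/sqrt(A_i), Y_i/sqrt(A_i), Z,
  evaluated on the Lie algebra (left-invariant vector fields).\<close>
definition gA :: "real^'n \<Rightarrow> ('n::finite) heis \<Rightarrow> ('n::finite) heis \<Rightarrow> real" where
  "gA A U W = (\<Sum>i\<in>UNIV. A $ i * (hx U $ i * hx W $ i + hy U $ i * hy W $ i)) + hz U * hz W"

text \<open>Magnetic form Omega = d(B zeta) on left-invariant fields:
  d(B zeta)(U,W) = - B zeta([U,W]).\<close>
definition Omega :: "real \<Rightarrow> ('n::finite) heis \<Rightarrow> ('n::finite) heis \<Rightarrow> real" where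
  "Omega B U W = - B * hz (bracket U W)"

text \<open>In exponential coordinates the left-invariant fields are
  X_i = d/dx_i - (y_i/2) d/dz,  Y_i = d/dy_i + (x_i/2) d/dz,  Z = d/dz,
  so the tangent vector v at p has frame coefficients v - 1/2 [p, v].\<close>
definition body_vel :: "(real \<Rightarrow> ('n::finite) heis) \<Rightarrow> real \<Rightarrow> ('n::finite) heis" where
  "body_vel \<sigma> t = vector_derivative \<sigma> (at t)
       - (1/2) *\<^sub>R bracket (\<sigma> t) (vector_derivative \<sigma> (at t))"

text \<open>Magnetic geodesic: nabla_{sigma'} sigma' = F sigma', with g(F u, v) = Omega(u, v).
  Writing sigma' = xi(t) in the left-invariant frame, nabla_{sigma'} sigma' = xi' + nabla_xi xi,
  where, by the Koszul formula for left-invariant fields, g(nabla_xi xi, W) = g([W,xi], xi).\<close>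
definition magnetic_geodesic :: "real^'n \<Rightarrow> real \<Rightarrow> (real \<Rightarrow> ('n::finite) heis) \<Rightarrow> bool" where
  "magnetic_geodesic A B \<sigma> \<longleftrightarrow>
     (\<forall>t. \<sigma> differentiable (at t)) \<and>
     (\<forall>t. body_vel \<sigma> differentiable (at t)) \<and>
     (\<forall>t W. gA A (vector_derivative (body_vel \<sigma>) (at t)) W
              + gA A (bracket W (body_vel \<sigma> t)) (body_vel \<sigma> t)
            = Omega B (body_vel \<sigma> t) W)"

definition speed :: "real^'n \<Rightarrow> (real \<Rightarrow> ('n::finite) heis) \<Rightarrow> real \<Rightarrow> real" where
  "speed A \<sigma> t = sqrt (gA A (body_vel \<sigma> t) (body_vel \<sigma> t))"

definition has_energy :: "real^'n \<Rightarrow> (real \<Rightarrow> ('n::finite) heis) \<Rightarrow> real \<Rightarrow> bool" where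
  "has_energy A \<sigma> E \<longleftrightarrow> (\<forall>t. speed A \<sigma> t = E)"

definition one_param_subgroup :: "(real \<Rightarrow> ('n::finite) heis) \<Rightarrow> bool" where
  "one_param_subgroup \<sigma> \<longleftrightarrow> (\<exists>W. \<forall>t. \<sigma> t = hexp (t *\<^sub>R W))"

definition gamma_periodic :: "('n::finite) heis \<Rightarrow> (real \<Rightarrow> ('n::finite) heis) \<Rightarrow> real \<Rightarrow> bool" where
  "gamma_periodic \<gamma> \<sigma> \<omega> \<longleftrightarrow> \<gamma> \<noteq> hunit \<and> \<omega> \<noteq> 0 \<and> (\<forall>t. hmul \<gamma> (\<sigma> t) = \<sigma> (t + \<omega>))"

end

theory Submission
  imports Defs
begin

text \<open>Evaluating \<gamma> exp(0) = exp(\<omega> W) shows that a \<gamma>-periodic one-parameter subgroup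
  exp(t W) has W = \<gamma>/\<omega>; for \<gamma> = exp(z Z) it is thus a vertical line. Conversely, Z is central, so a vertical
  line t \<mapsto> exp(t k Z) has constant body velocity k Z, which kills both the Koszul
  term and the Lorentz force: it is a magnetic geodesic of speed |k|, and left translation
  by exp(z Z) shifts it by z/k in time.\<close>

lemma bracket_scaleR_hZ_left [simp]: "bracket (c *\<^sub>R hZ) W = (0::'n::finite heis)"
  by (simp add: bracket_def hx_def hy_def hZ_def zero_prod_def)

lemma bracket_scaleR_hZ_right [simp]: "bracket W (c *\<^sub>R hZ) = (0::'n::finite heis)"
  by (simp add: bracket_def hx_def hy_def hZ_def zero_prod_def)

lemma bracket_zero_right [simp]: "bracket W 0 = (0::'n::finite heis)"
  by (simp add: bracket_def hx_def hy_def zero_prod_def)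

lemma hmul_hZ_left: "hmul (c *\<^sub>R hZ) p = c *\<^sub>R hZ + (p::'n::finite heis)"
  by (simp add: hmul_def)

lemma gA_zero_left [simp]: "gA A 0 (W::'n::finite heis) = 0"
  by (simp add: gA_def hx_def hy_def hz_def zero_prod_def)

lemma Omega_scaleR_hZ_left [simp]: "Omega B (c *\<^sub>R hZ) (W::'n::finite heis) = 0"
  by (simp add: Omega_def hz_def zero_prod_def)

lemma hexp_scaleR_hZ_ne_hunit: "c \<noteq> 0 \<Longrightarrow> hexp (c *\<^sub>R hZ) \<noteq> (hunit::'n::finite heis)"
  by (simp add: hexp_def hunit_def hZ_def zero_prod_def)

lemma one_param_subgroup_periodic:
  assumes "one_param_subgroup \<sigma>" and "gamma_periodic \<gamma> \<sigma> \<omega>"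
  shows "\<sigma> t = hexp ((t / \<omega>) *\<^sub>R \<gamma>)"
proof -
  obtain W where W: "\<And>t. \<sigma> t = t *\<^sub>R W"
    using assms(1) unfolding one_param_subgroup_def hexp_def by blast
  have "\<omega> \<noteq> 0" and "hmul \<gamma> (\<sigma> 0) = \<sigma> \<omega>"
    using assms(2) unfolding gamma_periodic_def by auto
  then have "\<gamma> = \<omega> *\<^sub>R W"
    by (simp add: W hmul_def)
  with \<open>\<omega> \<noteq> 0\<close> have "W = (1 / \<omega>) *\<^sub>R \<gamma>"
    by simp
  then show ?thesis
    by (simp add: W hexp_def)
qed

lemma vertical_line_has_vector_derivative:
  "((\<lambda>t. hexp ((t * k) *\<^sub>R (hZ::'n::finite heis))) has_vector_derivative k *\<^sub>R hZ) (at t)"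
  unfolding hexp_def scaleR_scaleR [symmetric]
  by (auto intro!: derivative_eq_intros)

lemma body_vel_vertical_line:
  "body_vel (\<lambda>t. hexp ((t * k) *\<^sub>R (hZ::'n::finite heis))) = (\<lambda>_. k *\<^sub>R hZ)"
  by (simp add: body_vel_def fun_eq_iff
      vector_derivative_at [OF vertical_line_has_vector_derivative] hexp_def)

lemma magnetic_geodesic_vertical_line:
  "magnetic_geodesic A B (\<lambda>t. hexp ((t * k) *\<^sub>R (hZ::'n::finite heis)))"
  unfolding magnetic_geodesic_def body_vel_vertical_line
  using vertical_line_has_vector_derivative
  by (auto simp: has_vector_derivative_def differentiable_def vector_derivative_const_at)

lemma speed_vertical_line:
  "speed A (\<lambda>t. hexp ((t * k) *\<^sub>R (hZ::'n::finite heis))) t = \<bar>k\<bar>"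
  unfolding speed_def body_vel_vertical_line
  by (simp add: gA_def hx_def hy_def hz_def hZ_def)

lemma gamma_periodic_vertical_line:
  assumes "c \<noteq> 0" and "k \<noteq> 0"
  shows "gamma_periodic (hexp (c *\<^sub>R hZ)) (\<lambda>t. hexp ((t * k) *\<^sub>R (hZ::'n::finite heis))) (c / k)"
  using assms hexp_scaleR_hZ_ne_hunit [OF assms(1)]
  by (simp add: gamma_periodic_def hexp_def hmul_hZ_left distrib_right scaleR_add_left)

theorem lemma4p4:
  fixes A :: "real^'n" and B z\<^sub>\<gamma> :: real and \<sigma> :: "real \<Rightarrow> 'n heis"
  assumes A_pos: "\<forall>i. A $ i > 0"
    and z_ne: "z\<^sub>\<gamma> \<noteq> 0"
    and geo: "magnetic_geodesic A B \<sigma>"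
    and ops: "one_param_subgroup \<sigma>"
    and per: "\<exists>\<omega>. gamma_periodic (hexp (z\<^sub>\<gamma> *\<^sub>R hZ)) \<sigma> \<omega>"
  shows "(\<exists>z\<^sub>0. z\<^sub>0 \<noteq> 0 \<and> (\<forall>t. \<sigma> t = hexp ((t * z\<^sub>0) *\<^sub>R hZ)))
    \<and> (\<forall>E>0. \<forall>s\<in>{1, -1::real}.
          magnetic_geodesic A B (\<lambda>t. hexp ((s * t * E) *\<^sub>R hZ))
        \<and> has_energy A (\<lambda>t. hexp ((s * t * E) *\<^sub>R hZ)) E
        \<and> gamma_periodic (hexp (z\<^sub>\<gamma> *\<^sub>R hZ)) (\<lambda>t. hexp ((s * t * E) *\<^sub>R hZ)) (z\<^sub>\<gamma> / (s * E)))"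
proof
  obtain \<omega> where \<omega>: "gamma_periodic (hexp (z\<^sub>\<gamma> *\<^sub>R hZ)) \<sigma> \<omega>"
    using per by blast
  then have "\<omega> \<noteq> 0" by (simp add: gamma_periodic_def)
  moreover have "\<sigma> t = hexp ((t * (z\<^sub>\<gamma> / \<omega>)) *\<^sub>R hZ)" for t
    using one_param_subgroup_periodic [OF ops \<omega>] by (simp add: hexp_def)
  ultimately show "\<exists>z\<^sub>0. z\<^sub>0 \<noteq> 0 \<and> (\<forall>t. \<sigma> t = hexp ((t * z\<^sub>0) *\<^sub>R hZ))"
    using z_ne by (intro exI [of _ "z\<^sub>\<gamma> / \<omega>"]) simp
next
  show "\<forall>E>0. \<forall>s\<in>{1, -1::real}.
          magnetic_geodesic A B (\<lambda>t. hexp ((s * t * E) *\<^sub>R hZ))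
        \<and> has_energy A (\<lambda>t. hexp ((s * t * E) *\<^sub>R hZ)) E
        \<and> gamma_periodic (hexp (z\<^sub>\<gamma> *\<^sub>R hZ)) (\<lambda>t. hexp ((s * t * E) *\<^sub>R hZ)) (z\<^sub>\<gamma> / (s * E))"
  proof (intro allI impI ballI)
    fix E s :: real
    assume "E > 0" and "s \<in> {1, -1}"
    then have sE: "s * E \<noteq> 0" and abs_sE: "\<bar>s * E\<bar> = E" by auto
    have line: "(\<lambda>t. hexp ((s * t * E) *\<^sub>R hZ)) = (\<lambda>t. hexp ((t * (s * E)) *\<^sub>R hZ))"
      by (simp add: mult_ac)
    show "magnetic_geodesic A B (\<lambda>t. hexp ((s * t * E) *\<^sub>R hZ))
        \<and> has_energy A (\<lambda>t. hexp ((s * t * E) *\<^sub>R hZ)) E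
        \<and> gamma_periodic (hexp (z\<^sub>\<gamma> *\<^sub>R hZ)) (\<lambda>t. hexp ((s * t * E) *\<^sub>R hZ)) (z\<^sub>\<gamma> / (s * E))"
      unfolding line has_energy_def speed_vertical_line abs_sE
      using magnetic_geodesic_vertical_line gamma_periodic_vertical_line [OF z_ne sE]
      by blast
  qed
qed

end
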